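(* For all integers $m,n\ge 2$, we have $\operatorname{BSR}(m,n)\ge z_2(m,n)\ge z(m,n)$.
   Context: An $m\times n$ biquadratic form is a polynomial $P(\mathbf{x},\mathbf{y})=\sum_{i,k=1}^m\sum_{j,l=1}^n a_{ijkl}x_ix_ky_jy_l$ with real coefficients, $\mathbf{x}\in\mathbb{R}^m$, $\mathbf{y}\in\mathbb{R}^n$. It is SOS if $P=\sum_{p=1}^r f_p^2$ for some bilinear forms $f_p(\mathbf{x},\mathbf{y})=\sum_{i,j}c^{(p)}_{ij}x_iy_j$; the least such $r$ is the SOS rank $\operatorname{sos}(P)$. $\operatorname{BSR}(m,n)$ is the maximum of $\operatorname{sos}(P)$ over all $m\times n$ SOS biquadratic forms $P$. The Zarankiewicz number $z(m,n)$ is the maximum number of edges of a bipartite graph with parts $[m]=\{1,\dots,m\}$ and $[n]$ containing no 4-cycle $C_4$ (equivalently, the maximum size of a set of cells of the $m\times n$ grid containing no four cells $(i,j),(i,l),(k,j),(k,l)$ with $i\ne k$, $j\ne l$). Double Zarankiewicz number: consider configurations $G=([m],[n],E_1\cup E_2)$ where $E_1\subseteq[m]\times[n]$ is a set of 1-edges (cells) and $E_2$ is a set of 2-edges $(i,j;k,l)$ with $i,k\in[m]$, $j,l\in[n]$, $i\ne k$, $j\ne l$; the cells $(i,j)$ and $(k,l)$ are the two halves of this 2-edge. Simplicity condition: the halves of all 2-edges are pairwise distinct cells and none of them belongs to $E_1$. A cell is occupied if it lies in $E_1$ or is a half of some 2-edge. $G$ contains a generalized $C_4$-cycle if (1) there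 are four 1-edges $(i,j),(i,l),(k,j),(k,l)\in E_1$ with $i\ne k$, $j\ne l$; or (2) there is a 2-edge $(i,j;k,l)\in E_2$ whose two opposite cells $(i,l)$ and $(k,j)$ are both occupied; or (3) there are a 2-edge $(i,j;p,q)\in E_2$ and a cell $(k,l)$ such that the five cells $(k,l),(k,j),(k,q),(i,l),(p,l)$ are pairwise distinct and all occupied. $z_2(m,n)$ is the maximum of $|E_1|+|E_2|$ over all such $G$ satisfying the simplicity condition and containing no generalized $C_4$-cycle. *)

theory Defs
  imports Complex_Main
begin

text \<open>Vectors x in R^m are represented as functions nat => real, only the
  coordinates 1..m being used. A biquadratic form is given by its real
  coefficient array a i j k l, and is identified with the polynomial function
  it defines (over the infinite field R, polynomial identity is equivalent to
  identity of functions).\<close>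

definition biquad :: "nat \<Rightarrow> nat \<Rightarrow> (nat \<Rightarrow> nat \<Rightarrow> nat \<Rightarrow> nat \<Rightarrow> real)
    \<Rightarrow> (nat \<Rightarrow> real) \<Rightarrow> (nat \<Rightarrow> real) \<Rightarrow> real" where
  "biquad m n a x y =
     (\<Sum>i\<in>{1..m}. \<Sum>k\<in>{1..m}. \<Sum>j\<in>{1..n}. \<Sum>l\<in>{1..n}.
        a i j k l * x i * x k * y j * y l)"

definition bilin :: "nat \<Rightarrow> nat \<Rightarrow> (nat \<Rightarrow> nat \<Rightarrow> real)
    \<Rightarrow> (nat \<Rightarrow> real) \<Rightarrow> (nat \<Rightarrow> real) \<Rightarrow> real" where
  "bilin m n c x y = (\<Sum>i\<in>{1..m}. \<Sum>j\<in>{1..n}. c i j * x i * y j)"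

definition sos_with :: "nat \<Rightarrow> nat \<Rightarrow> (nat \<Rightarrow> nat \<Rightarrow> nat \<Rightarrow> nat \<Rightarrow> real) \<Rightarrow> nat \<Rightarrow> bool" where
  "sos_with m n a r \<longleftrightarrow>
     (\<exists>c :: nat \<Rightarrow> nat \<Rightarrow> nat \<Rightarrow> real. \<forall>x y.
        biquad m n a x y = (\<Sum>p\<in>{1..r}. (bilin m n (c p) x y)\<^sup>2))"

definition is_sos :: "nat \<Rightarrow> nat \<Rightarrow> (nat \<Rightarrow> nat \<Rightarrow> nat \<Rightarrow> nat \<Rightarrow> real) \<Rightarrow> bool" where
  "is_sos m n a \<longleftrightarrow> (\<exists>r. sos_with m n a r)"

definition sos_rank :: "nat \<Rightarrow> nat \<Rightarrow> (nat \<Rightarrow> nat \<Rightarrow> nat \<Rightarrow> nat \<Rightarrow> real) \<Rightarrow> nat" where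
  "sos_rank m n a = (LEAST r. sos_with m n a r)"

text \<open>BSR(m,n): maximum SOS rank over all SOS m x n biquadratic forms
  (the set is nonempty and bounded, so Sup is its maximum).\<close>
definition BSR :: "nat \<Rightarrow> nat \<Rightarrow> nat" where
  "BSR m n = Sup {sos_rank m n a | a. is_sos m n a}"

definition grid :: "nat \<Rightarrow> nat \<Rightarrow> (nat \<times> nat) set" where
  "grid m n = {1..m} \<times> {1..n}"

definition C4_free :: "(nat \<times> nat) set \<Rightarrow> bool" where
  "C4_free E \<longleftrightarrow> \<not> (\<exists>i j k l. i \<noteq> k \<and> j \<noteq> l \<and>
      (i,j) \<in> E \<and> (i,l) \<in> E \<and> (k,j) \<in> E \<and> (k,l) \<in> E)"

definition zaran :: "nat \<Rightarrow> nat \<Rightarrow> nat" where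
  "zaran m n = Max {card E | E. E \<subseteq> grid m n \<and> C4_free E}"

text \<open>Double configurations: E1 a set of cells, E2 a set of 2-edges
  ((i,j),(k,l)) representing (i,j;k,l).\<close>
definition occupied :: "(nat \<times> nat) set \<Rightarrow> ((nat \<times> nat) \<times> (nat \<times> nat)) set
    \<Rightarrow> nat \<times> nat \<Rightarrow> bool" where
  "occupied E1 E2 c \<longleftrightarrow> c \<in> E1 \<or> (\<exists>e\<in>E2. c = fst e \<or> c = snd e)"

definition double_config :: "nat \<Rightarrow> nat \<Rightarrow> (nat \<times> nat) set
    \<Rightarrow> ((nat \<times> nat) \<times> (nat \<times> nat)) set \<Rightarrow> bool" where
  "double_config m n E1 E2 \<longleftrightarrow>
     E1 \<subseteq> grid m n \<and>
     (\<forall>((i,j),(k,l))\<in>E2. (i,j) \<in> grid m n \<and> (k,l) \<in> grid m n \<and> i \<noteq> k \<and> j \<noteq> l)"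

definition simple_config :: "(nat \<times> nat) set
    \<Rightarrow> ((nat \<times> nat) \<times> (nat \<times> nat)) set \<Rightarrow> bool" where
  "simple_config E1 E2 \<longleftrightarrow>
     (\<forall>e\<in>E2. \<forall>e'\<in>E2. e \<noteq> e' \<longrightarrow> {fst e, snd e} \<inter> {fst e', snd e'} = {}) \<and>
     (\<forall>e\<in>E2. fst e \<notin> E1 \<and> snd e \<notin> E1)"

definition has_gen_C4 :: "(nat \<times> nat) set
    \<Rightarrow> ((nat \<times> nat) \<times> (nat \<times> nat)) set \<Rightarrow> bool" where
  "has_gen_C4 E1 E2 \<longleftrightarrow>
     \<not> C4_free E1 \<or>
     (\<exists>i j k l. ((i,j),(k,l)) \<in> E2 \<and> occupied E1 E2 (i,l) \<and> occupied E1 E2 (k,j)) \<or>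
     (\<exists>i j p q k l. ((i,j),(p,q)) \<in> E2 \<and>
        distinct [(k,l),(k,j),(k,q),(i,l),(p,l)] \<and>
        occupied E1 E2 (k,l) \<and> occupied E1 E2 (k,j) \<and> occupied E1 E2 (k,q) \<and>
        occupied E1 E2 (i,l) \<and> occupied E1 E2 (p,l))"

definition zaran2 :: "nat \<Rightarrow> nat \<Rightarrow> nat" where
  "zaran2 m n = Max {card E1 + card E2 | E1 E2.
      double_config m n E1 E2 \<and> simple_config E1 E2 \<and> \<not> has_gen_C4 E1 E2}"

end

theory Submission
  imports Defs
begin

(* Given an extremal configuration (E1, E2), take the biquadratic form with one square x_i^2 y_j^2
   per 1-edge (i,j) and one square (x_i y_j + x_k y_l)^2 per 2-edge (i,j;k,l), so |E1| + |E2|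
   squares.  Polarization shows that any representation as a sum of r squares of bilinear forms,
   with coefficient vectors c(u) in R^r for the cells u, has the same values of
   <c(i,j), c(k,l)> + <c(k,j), c(i,l)> as the defining one.  The absence of generalized 4-cycles
   is exactly what lets one solve these equations for the individual inner products: the vectors
   of the first cells of the |E1| + |E2| squares turn out orthonormal in R^r, so r >= |E1| + |E2|.
   A configuration with E2 = {} is just a C4-free cell set, whence z <= z2. *)

section \<open>Sums of squares of bilinear forms\<close>

definition sum_sq_bilin :: "nat \<Rightarrow> nat \<Rightarrow> (nat \<Rightarrow> nat \<Rightarrow> nat \<Rightarrow> real) \<Rightarrow> nat
    \<Rightarrow> (nat \<Rightarrow> real) \<Rightarrow> (nat \<Rightarrow> real) \<Rightarrow> real" where
  "sum_sq_bilin m n c r x y = (\<Sum>p\<in>{1..r}. (bilin m n (c p) x y)\<^sup>2)"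

lemma sos_with_iff: "sos_with m n a r \<longleftrightarrow> (\<exists>c. biquad m n a = sum_sq_bilin m n c r)"
  unfolding sos_with_def sum_sq_bilin_def by (simp add: fun_eq_iff)

lemma finite_grid: "finite (grid m n)"
  by (simp add: grid_def)

lemma card_grid: "card (grid m n) = m * n"
  by (simp add: grid_def card_cartesian_product)

lemma bilin_eq_sum_grid:
  "bilin m n c x y = (\<Sum>t\<in>grid m n. c (fst t) (snd t) * (x (fst t) * y (snd t)))"
  unfolding bilin_def grid_def by (simp add: sum.cartesian_product mult_ac case_prod_beta)

definition pair_vec :: "nat \<Rightarrow> nat \<Rightarrow> real \<Rightarrow> nat \<Rightarrow> real" where
  "pair_vec i k s u = of_bool (u = i) + s * of_bool (u = k)"

definition gram :: "(nat \<Rightarrow> nat \<Rightarrow> nat \<Rightarrow> real) \<Rightarrow> nat \<Rightarrow> nat \<times> nat \<Rightarrow> nat \<times> nat \<Rightarrow> real" where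
  "gram c r u v = (\<Sum>p\<in>{1..r}. c p (fst u) (snd u) * c p (fst v) (snd v))"

lemma sum_mult_pair_vec:
  "finite A \<Longrightarrow> i \<in> A \<Longrightarrow> k \<in> A \<Longrightarrow> (\<Sum>u\<in>A. f u * pair_vec i k s u) = f i + s * f k"
  by (simp add: pair_vec_def distrib_left sum.distrib mult.left_commute[of _ s]
      sum_distrib_left[symmetric] of_bool_def if_distrib[of "(*) _"] cong: if_cong)

lemma bilin_pair_vec:
  assumes "i \<in> {1..m}" "k \<in> {1..m}" "j \<in> {1..n}" "l \<in> {1..n}"
  shows "bilin m n c (pair_vec i k s) (pair_vec j l t) = c i j + t * c i l + s * c k j + s * t * c k l"
proof -
  have row: "(\<Sum>v\<in>{1..n}. c u v * pair_vec j l t v) = c u j + t * c u l" for u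
    using assms by (simp add: sum_mult_pair_vec)
  have "bilin m n c (pair_vec i k s) (pair_vec j l t)
      = (\<Sum>u\<in>{1..m}. (\<Sum>v\<in>{1..n}. c u v * pair_vec j l t v) * pair_vec i k s u)"
    unfolding bilin_def by (simp add: sum_distrib_left sum_distrib_right mult_ac)
  also have "\<dots> = (\<Sum>u\<in>{1..m}. (c u j + t * c u l) * pair_vec i k s u)"
    by (simp only: row)
  also have "\<dots> = c i j + t * c i l + s * c k j + s * t * c k l"
    using assms by (simp only: sum_mult_pair_vec finite_atLeastAtMost) (simp add: algebra_simps)
  finally show ?thesis .
qed

lemma sum_sq_bilin_polarization:
  fixes c :: "nat \<Rightarrow> nat \<Rightarrow> nat \<Rightarrow> real" and r :: nat
  assumes "i \<in> {1..m}" "k \<in> {1..m}" "j \<in> {1..n}" "l \<in> {1..n}"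
  defines "Q \<equiv> sum_sq_bilin m n c r"
  shows "Q (pair_vec i k 1) (pair_vec j l 1) - Q (pair_vec i k 1) (pair_vec j l (-1))
       - Q (pair_vec i k (-1)) (pair_vec j l 1) + Q (pair_vec i k (-1)) (pair_vec j l (-1))
     = 8 * (gram c r (i, j) (k, l) + gram c r (k, j) (i, l))"
  using assms by (simp add: sum_sq_bilin_def bilin_pair_vec gram_def power2_eq_square sum_subtractf[symmetric]
      sum.distrib[symmetric] sum_distrib_left algebra_simps)

lemma gram_cross_eq_if_sum_sq_bilin_eq:
  assumes eq: "sum_sq_bilin m n c r = sum_sq_bilin m n d s"
    and "(i, j) \<in> grid m n" "(k, l) \<in> grid m n"
  shows "gram c r (i, j) (k, l) + gram c r (k, j) (i, l) = gram d s (i, j) (k, l) + gram d s (k, j) (i, l)"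
  using sum_sq_bilin_polarization[of i m k j n l c r] sum_sq_bilin_polarization[of i m k j n l d s]
    assms(2,3) unfolding eq grid_def by simp

lemma biquad_gram: "biquad m n (\<lambda>i j k l. gram c r (i, j) (k, l)) = sum_sq_bilin m n c r"
proof -
  have "(bilin m n (c p) x y)\<^sup>2 = (\<Sum>i\<in>{1..m}. \<Sum>k\<in>{1..m}. \<Sum>j\<in>{1..n}. \<Sum>l\<in>{1..n}.
          c p i j * c p k l * x i * x k * y j * y l)" for p x y
    unfolding bilin_def power2_eq_square sum_product
    by (simp add: sum_distrib_left sum_distrib_right mult_ac sum.swap[of _ "{1..n}" "{1..m}"])
  then show ?thesis
    unfolding biquad_def gram_def sum_sq_bilin_def fun_eq_iff
    by (simp only: fst_conv snd_conv sum_distrib_right sum.swap[where B = "{1..r}"]) simp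
qed

section \<open>Orthonormal families and Bessel's inequality\<close>

lemma bessel_inequality:
  fixes v :: "'a \<Rightarrow> 'b \<Rightarrow> real" and x :: "'b \<Rightarrow> real"
  assumes "finite R" "finite P"
    and orth: "\<And>q q'. q \<in> R \<Longrightarrow> q' \<in> R \<Longrightarrow> (\<Sum>p\<in>P. v q p * v q' p) = of_bool (q = q')"
  shows "(\<Sum>q\<in>R. (\<Sum>p\<in>P. v q p * x p)\<^sup>2) \<le> (\<Sum>p\<in>P. (x p)\<^sup>2)"
proof -
  define a where "a q = (\<Sum>p\<in>P. v q p * x p)" for q
  define y where "y p = (\<Sum>q\<in>R. a q * v q p)" for p
  have inner: "(\<Sum>p\<in>P. x p * y p) = (\<Sum>q\<in>R. (a q)\<^sup>2)"
  proof -
    have "(\<Sum>p\<in>P. x p * y p) = (\<Sum>p\<in>P. \<Sum>q\<in>R. a q * (v q p * x p))"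
      unfolding y_def by (simp add: sum_distrib_left mult_ac)
    also have "\<dots> = (\<Sum>q\<in>R. a q * a q)"
      unfolding a_def[symmetric] sum.swap[of _ _ P] sum_distrib_left[symmetric] ..
    finally show ?thesis by (simp add: power2_eq_square)
  qed
  have "(\<Sum>p\<in>P. (y p)\<^sup>2) = (\<Sum>p\<in>P. \<Sum>q\<in>R. \<Sum>q'\<in>R. a q * a q' * (v q p * v q' p))"
    unfolding y_def power2_eq_square sum_product by (simp add: mult_ac)
  also have "\<dots> = (\<Sum>q\<in>R. \<Sum>q'\<in>R. a q * a q' * (\<Sum>p\<in>P. v q p * v q' p))"
    unfolding sum.swap[of _ _ P] sum_distrib_left ..
  also have "\<dots> = (\<Sum>q\<in>R. \<Sum>q'\<in>R. a q * a q' * of_bool (q = q'))"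
    using orth by simp
  also have "\<dots> = (\<Sum>q\<in>R. (a q)\<^sup>2)"
    using \<open>finite R\<close> by (simp add: of_bool_def power2_eq_square if_distrib[of "(*) _"] cong: if_cong)
  finally have norm: "(\<Sum>p\<in>P. (y p)\<^sup>2) = (\<Sum>q\<in>R. (a q)\<^sup>2)" .
  have "0 \<le> (\<Sum>p\<in>P. (x p - y p)\<^sup>2)"
    by (simp add: sum_nonneg)
  also have "\<dots> = (\<Sum>p\<in>P. (x p)\<^sup>2) - 2 * (\<Sum>p\<in>P. x p * y p) + (\<Sum>p\<in>P. (y p)\<^sup>2)"
    by (simp add: power2_diff sum.distrib sum_subtractf sum_distrib_left mult.assoc)
  finally show ?thesis
    unfolding inner norm a_def by simp
qed

lemma card_le_card_if_orthonormal:
  fixes v :: "'a \<Rightarrow> 'b \<Rightarrow> real"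
  assumes "finite R" "finite P"
    and orth: "\<And>q q'. q \<in> R \<Longrightarrow> q' \<in> R \<Longrightarrow> (\<Sum>p\<in>P. v q p * v q' p) = of_bool (q = q')"
  shows "card R \<le> card P"
proof -
  have coord: "(\<Sum>q\<in>R. (v q p)\<^sup>2) \<le> 1" if "p \<in> P" for p
    using bessel_inequality[OF assms, of "\<lambda>p'. of_bool (p' = p)"] that \<open>finite P\<close>
    by (simp add: of_bool_def if_distrib[of "(*) _"] if_distrib[of "\<lambda>z. z\<^sup>2"] cong: if_cong)
  have "real (card R) = (\<Sum>q\<in>R. \<Sum>p\<in>P. (v q p)\<^sup>2)"
    using orth by (simp add: power2_eq_square)
  also have "\<dots> = (\<Sum>p\<in>P. \<Sum>q\<in>R. (v q p)\<^sup>2)"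
    by (rule sum.swap)
  also have "\<dots> \<le> (\<Sum>p\<in>P. 1)"
    by (rule sum_mono) (rule coord)
  finally show ?thesis by simp
qed

section \<open>At most mn squares are needed\<close>

lemma complete_the_square:
  fixes f :: "'b \<Rightarrow> 'a \<Rightarrow> real"
  assumes "finite P"
  shows "\<exists>e f'. (\<forall>p\<in>P. f' p x = 0) \<and> (\<forall>w. (\<Sum>p\<in>P. (\<Sum>t\<in>T. f p t * w t)\<^sup>2)
           = (\<Sum>t\<in>T. e t * w t)\<^sup>2 + (\<Sum>p\<in>P. (\<Sum>t\<in>T. f' p t * w t)\<^sup>2))"
proof -
  \<comment> \<open>If a = 0, all f p x vanish, and division by zero makes both e and the correction 0.\<close>
  define a where "a = (\<Sum>p\<in>P. (f p x)\<^sup>2)"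
  define d where "d t = (\<Sum>p\<in>P. f p x * f p t)" for t
  define f' where "f' p t = f p t - f p x * d t / a" for p t
  define e where "e t = d t / sqrt a" for t
  have a0: "f p x = 0" if "a = 0" "p \<in> P" for p
    using that assms by (simp add: a_def sum_nonneg_eq_0_iff)
  have "f' p x = 0" if "p \<in> P" for p
  proof (cases "a = 0")
    case True
    then show ?thesis using a0 that by (simp add: f'_def)
  next
    case False
    then have "d x = a" by (simp add: d_def a_def power2_eq_square)
    with False show ?thesis by (simp add: f'_def)
  qed
  moreover have "(\<Sum>p\<in>P. (\<Sum>t\<in>T. f p t * w t)\<^sup>2)
           = (\<Sum>t\<in>T. e t * w t)\<^sup>2 + (\<Sum>p\<in>P. (\<Sum>t\<in>T. f' p t * w t)\<^sup>2)" for w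
  proof -
    define F where "F p = (\<Sum>t\<in>T. f p t * w t)" for p
    define D where "D = (\<Sum>t\<in>T. d t * w t)"
    have D: "D = (\<Sum>p\<in>P. f p x * F p)"
      unfolding D_def d_def F_def
      by (simp add: sum_distrib_left sum_distrib_right mult_ac sum.swap[of _ P])
    have D0: "D = 0" if "a = 0"
      using a0[OF that] D by simp
    have e: "(\<Sum>t\<in>T. e t * w t) = D / sqrt a"
      unfolding e_def D_def by (simp add: sum_divide_distrib)
    have f': "(\<Sum>t\<in>T. f' p t * w t) = F p - f p x * (D / a)" for p
      unfolding f'_def F_def D_def
      by (simp add: sum_subtractf sum_distrib_left sum_divide_distrib algebra_simps)
    have "(\<Sum>p\<in>P. (F p - f p x * c)\<^sup>2)
        = (\<Sum>p\<in>P. (F p)\<^sup>2) - 2 * c * (\<Sum>p\<in>P. f p x * F p) + c\<^sup>2 * a" for c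
      unfolding a_def
      by (simp add: power2_diff sum_subtractf sum.distrib sum_distrib_left mult_ac power_mult_distrib)
    then have "(\<Sum>p\<in>P. (F p - f p x * (D / a))\<^sup>2)
        = (\<Sum>p\<in>P. (F p)\<^sup>2) - 2 * (D / a) * D + (D / a)\<^sup>2 * a"
      unfolding D .
    also have "\<dots> = (\<Sum>p\<in>P. (F p)\<^sup>2) - (D / sqrt a)\<^sup>2"
      using D0 a_def by (cases "a = 0") (simp_all add: power2_eq_square sum_nonneg)
    finally show ?thesis
      unfolding e f' F_def by simp
  qed
  ultimately show ?thesis by blast
qed

lemma sum_squares_reduce_to_card:
  fixes f :: "'b \<Rightarrow> 'a \<Rightarrow> real"
  assumes "finite S" "finite P"
  shows "\<exists>g. \<forall>w. (\<Sum>p\<in>P. (\<Sum>t\<in>S. f p t * w t)\<^sup>2) = (\<Sum>p\<in>{1..card S}. (\<Sum>t\<in>S. g p t * w t)\<^sup>2)"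
  using assms(1)
proof (induction S arbitrary: f rule: finite_induct)
  case empty
  then show ?case by simp
next
  case (insert t0 S)
  obtain e f' where f't0: "\<forall>p\<in>P. f' p t0 = 0" and completed: "\<forall>w.
      (\<Sum>p\<in>P. (\<Sum>t\<in>insert t0 S. f p t * w t)\<^sup>2)
        = (\<Sum>t\<in>insert t0 S. e t * w t)\<^sup>2 + (\<Sum>p\<in>P. (\<Sum>t\<in>insert t0 S. f' p t * w t)\<^sup>2)"
    using complete_the_square[OF assms(2), where x = t0] by blast
  obtain g where g: "\<And>w. (\<Sum>p\<in>P. (\<Sum>t\<in>S. f' p t * w t)\<^sup>2) = (\<Sum>p\<in>{1..card S}. (\<Sum>t\<in>S. g p t * w t)\<^sup>2)"
    using insert.IH by blast
  define g' where "g' p t = (if p \<le> card S then (if t = t0 then 0 else g p t) else e t)" for p t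
  have f'S: "(\<Sum>t\<in>insert t0 S. f' p t * w t) = (\<Sum>t\<in>S. f' p t * w t)" if "p \<in> P" for p w
    using insert.hyps f't0 that by simp
  have "(\<Sum>p\<in>P. (\<Sum>t\<in>insert t0 S. f p t * w t)\<^sup>2)
      = (\<Sum>p\<in>{1..card (insert t0 S)}. (\<Sum>t\<in>insert t0 S. g' p t * w t)\<^sup>2)" for w
  proof -
    have g': "(\<Sum>t\<in>insert t0 S. g' p t * w t) = (\<Sum>t\<in>S. g p t * w t)" if "p \<le> card S" for p
      using insert.hyps that by (auto simp: g'_def intro: sum.cong)
    have "(\<Sum>p\<in>P. (\<Sum>t\<in>insert t0 S. f p t * w t)\<^sup>2)
        = (\<Sum>t\<in>insert t0 S. e t * w t)\<^sup>2 + (\<Sum>p\<in>{1..card S}. (\<Sum>t\<in>S. g p t * w t)\<^sup>2)"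
      using completed f'S g by simp
    also have "\<dots> = (\<Sum>p\<in>{1..Suc (card S)}. (\<Sum>t\<in>insert t0 S. g' p t * w t)\<^sup>2)"
      using g' by (simp add: g'_def)
    finally show ?thesis
      using insert.hyps by simp
  qed
  then show ?case by blast
qed

lemma sum_sq_bilin_reduce: "\<exists>d. sum_sq_bilin m n c r = sum_sq_bilin m n d (m * n)"
proof -
  obtain g where g: "\<forall>w. (\<Sum>p\<in>{1..r}. (\<Sum>t\<in>grid m n. c p (fst t) (snd t) * w t)\<^sup>2)
      = (\<Sum>p\<in>{1..card (grid m n)}. (\<Sum>t\<in>grid m n. g p t * w t)\<^sup>2)"
    using sum_squares_reduce_to_card[OF finite_grid finite_atLeastAtMost,
        where f = "\<lambda>p t. c p (fst t) (snd t)"] by blast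
  then have "sum_sq_bilin m n c r = sum_sq_bilin m n (\<lambda>p i j. g p (i, j)) (m * n)"
    unfolding sum_sq_bilin_def fun_eq_iff bilin_eq_sum_grid card_grid by simp
  then show ?thesis
    by blast
qed

lemma sos_with_card_grid: "sos_with m n a r \<Longrightarrow> sos_with m n a (m * n)"
  using sum_sq_bilin_reduce unfolding sos_with_iff by metis

lemma sos_rank_le: "is_sos m n a \<Longrightarrow> sos_rank m n a \<le> m * n"
  unfolding is_sos_def sos_rank_def by (metis sos_with_card_grid Least_le)

lemma sos_rank_le_BSR:
  assumes "is_sos m n a"
  shows "sos_rank m n a \<le> BSR m n"
proof -
  have "finite {sos_rank m n a | a. is_sos m n a}"
    by (rule finite_subset[of _ "{..m * n}"]) (auto dest: sos_rank_le)
  with assms show ?thesis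
    unfolding BSR_def by (auto intro: le_cSup_finite)
qed

section \<open>Configurations without generalized 4-cycles\<close>

locale gen_C4_free_config =
  fixes m n :: nat and E1 :: "(nat \<times> nat) set" and E2 :: "((nat \<times> nat) \<times> (nat \<times> nat)) set"
  assumes config: "double_config m n E1 E2"
    and simple: "simple_config E1 E2"
    and no_gen_C4: "\<not> has_gen_C4 E1 E2"
begin

abbreviation occ :: "nat \<times> nat \<Rightarrow> bool" where
  "occ \<equiv> occupied E1 E2"

definition paired :: "nat \<times> nat \<Rightarrow> nat \<times> nat \<Rightarrow> bool" where
  "paired u v \<longleftrightarrow> (u, v) \<in> E2 \<or> (v, u) \<in> E2"

lemma paired_sym: "paired u v \<longleftrightarrow> paired v u"
  unfolding paired_def by blast

lemma E2_cells:
  assumes "((i, j), (k, l)) \<in> E2"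
  shows "(i, j) \<in> grid m n \<and> (k, l) \<in> grid m n \<and> i \<noteq> k \<and> j \<noteq> l"
  using config assms unfolding double_config_def by fast

lemma paired_cells:
  "paired (i, j) (k, l) \<Longrightarrow> (i, j) \<in> grid m n \<and> (k, l) \<in> grid m n \<and> i \<noteq> k \<and> j \<noteq> l"
  unfolding paired_def using E2_cells by blast

lemma paired_unique: "paired u v \<Longrightarrow> paired u w \<Longrightarrow> v = w"
  using simple unfolding simple_config_def paired_def by fastforce

lemma paired_not_E1: "paired u v \<Longrightarrow> u \<notin> E1"
  using simple unfolding simple_config_def paired_def by force

lemma occ_iff: "occ u \<longleftrightarrow> u \<in> E1 \<or> (\<exists>v. paired u v)"
  unfolding occupied_def paired_def by force

lemma paired_occ: "paired u v \<Longrightarrow> occ u"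
  using occ_iff by blast

lemma occ_grid:
  assumes "occ u"
  shows "u \<in> grid m n"
proof -
  have "E1 \<subseteq> grid m n"
    using config unfolding double_config_def by blast
  moreover have "u \<in> grid m n" if "paired u v" for v
    using that paired_cells[of "fst u" "snd u" "fst v" "snd v"] by simp
  ultimately show ?thesis
    using assms occ_iff by blast
qed

lemma E1_C4_free: "C4_free E1"
  using no_gen_C4 unfolding has_gen_C4_def by blast

lemma paired_opposite_unoccupied: "paired (i, j) (k, l) \<Longrightarrow> \<not> (occ (i, l) \<and> occ (k, j))"
  using no_gen_C4 unfolding has_gen_C4_def paired_def by blast

lemma paired_five_cells:
  assumes "paired (i, j) (p, q)" "distinct [(k, l), (k, j), (k, q), (i, l), (p, l)]"
    and "occ (k, l)" "occ (k, j)" "occ (k, q)" "occ (i, l)" "occ (p, l)"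
  shows False
proof -
  have "((i, j), (p, q)) \<notin> E2"
    using assms no_gen_C4 unfolding has_gen_C4_def by blast
  moreover have "distinct [(k, l), (k, q), (k, j), (p, l), (i, l)]"
    using assms(2) by auto
  then have "((p, q), (i, j)) \<notin> E2"
    using assms no_gen_C4 unfolding has_gen_C4_def by blast
  ultimately show False
    using assms(1) unfolding paired_def by blast
qed

text \<open>The configuration form has one term x_i y_j for every 1-edge (i,j) and one term
  x_i y_j + x_k y_l for every 2-edge (i,j;k,l); same_term u v says that the monomials of the cells
  u and v occur in a common term, and a term is indexed by its first cell, an element of
  lead_cells.\<close>

definition same_term :: "nat \<times> nat \<Rightarrow> nat \<times> nat \<Rightarrow> bool" where
  "same_term u v \<longleftrightarrow> (u = v \<and> occ u) \<or> paired u v"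

lemma same_term_refl_iff: "same_term u u \<longleftrightarrow> occ u"
  unfolding same_term_def using paired_cells by (cases u) blast

lemma same_term_sym: "same_term u v \<longleftrightarrow> same_term v u"
  unfolding same_term_def using paired_sym by blast

lemma same_term_occ: "same_term u v \<Longrightarrow> occ u \<and> occ v"
  unfolding same_term_def occ_iff using paired_sym by blast

definition lead_cells :: "(nat \<times> nat) set" where
  "lead_cells = E1 \<union> fst ` E2"

lemma finite_lead_cells: "finite lead_cells"
proof -
  have "E1 \<subseteq> grid m n" "E2 \<subseteq> grid m n \<times> grid m n"
    using config E2_cells unfolding double_config_def by auto
  then show ?thesis
    unfolding lead_cells_def by (meson finite_grid finite_SigmaI finite_imageI finite_subset finite_Un)
qed

lemma second_half_not_lead:
  assumes "(v, u) \<in> E2"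
  shows "u \<notin> lead_cells"
proof
  assume "u \<in> lead_cells"
  then consider "u \<in> E1" | w where "(u, w) \<in> E2"
    unfolding lead_cells_def by force
  then show False
  proof cases
    case 1
    then show False using assms paired_not_E1 unfolding paired_def by blast
  next
    case 2
    with assms simple have "(v, u) = (u, w)"
      unfolding simple_config_def by fastforce
    then show False using assms E2_cells by (cases u) auto
  qed
qed

lemma lead_cells_occ: "q \<in> lead_cells \<Longrightarrow> occ q"
  unfolding lead_cells_def occupied_def by force

lemma same_term_lead_iff: "q \<in> lead_cells \<Longrightarrow> same_term q u \<longleftrightarrow> u = q \<or> (q, u) \<in> E2"
  unfolding same_term_def paired_def using lead_cells_occ second_half_not_lead by blast

lemma lead_cell_unique:
  "q \<in> lead_cells \<Longrightarrow> q' \<in> lead_cells \<Longrightarrow> same_term q u \<Longrightarrow> same_term q' u \<Longrightarrow> q = q'"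
  unfolding same_term_lead_iff using second_half_not_lead paired_unique paired_sym
  unfolding paired_def by metis

lemma same_term_iff_common_lead: "same_term u v \<longleftrightarrow> (\<exists>q\<in>lead_cells. same_term q u \<and> same_term q v)"
proof
  assume "same_term u v"
  then consider "u = v" "u \<in> E1" | w where "u = v" "(u, w) \<in> E2" | w where "u = v" "(w, u) \<in> E2"
    | "(u, v) \<in> E2" | "(v, u) \<in> E2"
    unfolding same_term_def paired_def occupied_def by force
  then show "\<exists>q\<in>lead_cells. same_term q u \<and> same_term q v"
    by cases (force simp: lead_cells_def same_term_lead_iff)+
next
  assume "\<exists>q\<in>lead_cells. same_term q u \<and> same_term q v"
  then obtain q where "q \<in> lead_cells" "u = q \<or> (q, u) \<in> E2" "v = q \<or> (q, v) \<in> E2"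
    using same_term_lead_iff by blast
  then show "same_term u v"
    unfolding same_term_def paired_def using lead_cells_occ paired_unique occ_iff
    unfolding paired_def by metis
qed

lemma sum_lead_cells_same_term:
  "(\<Sum>q\<in>lead_cells. of_bool (same_term q u) * of_bool (same_term q v)) = (of_bool (same_term u v) :: real)"
proof (cases "same_term u v")
  case True
  then obtain q where q: "q \<in> lead_cells" "same_term q u" "same_term q v"
    using same_term_iff_common_lead by blast
  have "of_bool (same_term q' u) * of_bool (same_term q' v) = (of_bool (q' = q) :: real)"
    if "q' \<in> lead_cells" for q'
  proof (cases "q' = q")
    case False
    then have "\<not> same_term q' u"
      using lead_cell_unique[OF that q(1) _ q(2)] by blast
    with False show ?thesis by simp
  qed (use q in simp)
  then have "(\<Sum>q'\<in>lead_cells. of_bool (same_term q' u) * of_bool (same_term q' v))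
      = (\<Sum>q'\<in>lead_cells. of_bool (q' = q) :: real)"
    by (rule sum.cong[OF refl])
  also have "\<dots> = 1"
    using q(1) finite_lead_cells by simp
  finally show ?thesis
    using True by simp
next
  case False
  then have "\<not> (same_term q u \<and> same_term q v)" if "q \<in> lead_cells" for q
    using that unfolding same_term_iff_common_lead[of u v] by blast
  with False show ?thesis
    by (simp add: sum.neutral)
qed

lemma card_lead_cells: "card lead_cells = card E1 + card E2"
proof -
  have "E1 \<inter> fst ` E2 = {}"
    using paired_not_E1 unfolding paired_def by force
  moreover have "inj_on fst E2"
    using paired_unique unfolding paired_def by (intro inj_onI) (metis prod.collapse)
  moreover have "finite E1" "finite (fst ` E2)"
    using finite_lead_cells unfolding lead_cells_def by auto
  ultimately show ?thesis
    unfolding lead_cells_def by (simp add: card_Un_disjoint card_image)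
qed

definition config_form :: "nat \<Rightarrow> nat \<Rightarrow> nat \<Rightarrow> nat \<Rightarrow> real" where
  "config_form i j k l = of_bool (same_term (i, j) (k, l))"

lemma config_form_reference:
  obtains c where "\<And>u v. gram c (card lead_cells) u v = of_bool (same_term u v)"
    and "biquad m n config_form = sum_sq_bilin m n c (card lead_cells)"
proof -
  obtain h where h: "bij_betw h {1..card lead_cells} lead_cells"
    using ex_bij_betw_nat_finite_1[OF finite_lead_cells] by blast
  define c where "c p i j = (of_bool (same_term (h p) (i, j)) :: real)" for p i j
  have gram_c: "gram c (card lead_cells) u v = of_bool (same_term u v)" for u v
  proof -
    have "gram c (card lead_cells) u v
        = (\<Sum>p\<in>{1..card lead_cells}. of_bool (same_term (h p) u) * of_bool (same_term (h p) v))"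
      unfolding gram_def c_def by simp
    also have "\<dots> = (\<Sum>q\<in>lead_cells. of_bool (same_term q u) * of_bool (same_term q v))"
      by (rule sum.reindex_bij_betw[OF h])
    finally show ?thesis
      by (simp only: sum_lead_cells_same_term)
  qed
  moreover have "biquad m n config_form = sum_sq_bilin m n c (card lead_cells)"
    unfolding biquad_gram[symmetric] gram_c config_form_def ..
  ultimately show thesis
    using that by blast
qed

end

section \<open>Representations of the configuration form\<close>

text \<open>Here c, r is an arbitrary representation of the configuration form as a sum of r squares;
  gram_cross is the information that polarization extracts from it.\<close>

locale config_gram = gen_C4_free_config +
  fixes c :: "nat \<Rightarrow> nat \<Rightarrow> nat \<Rightarrow> real" and r :: nat
  assumes gram_cross: "\<And>i j k l. (i, j) \<in> grid m n \<Longrightarrow> (k, l) \<in> grid m n \<Longrightarrow>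
      gram c r (i, j) (k, l) + gram c r (k, j) (i, l)
    = of_bool (same_term (i, j) (k, l)) + of_bool (same_term (k, j) (i, l))"
begin

abbreviation G :: "nat \<times> nat \<Rightarrow> nat \<times> nat \<Rightarrow> real" where
  "G \<equiv> gram c r"

lemma gram_sym: "G u v = G v u"
  unfolding gram_def by (simp add: mult.commute)

lemma gram_diag: "u \<in> grid m n \<Longrightarrow> G u u = of_bool (occ u)"
  using gram_cross[of "fst u" "snd u" "fst u" "snd u"] same_term_refl_iff by simp

lemma gram_collinear:
  assumes "(i, j) \<in> grid m n" "(k, l) \<in> grid m n" "i = k \<or> j = l" "(i, j) \<noteq> (k, l)"
  shows "G (i, j) (k, l) = 0"
proof -
  have "\<not> same_term (i, j) (k, l)"
    using assms(3,4) paired_cells unfolding same_term_def by blast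
  then show ?thesis
    using assms(3) gram_cross[OF assms(1,2)] gram_sym[of "(k, l)" "(i, j)"] same_term_sym by auto
qed

lemma coeff_eq_0_if_unoccupied:
  assumes "u \<in> grid m n" "\<not> occ u" "p \<in> {1..r}"
  shows "c p (fst u) (snd u) = 0"
proof -
  have "(\<Sum>p\<in>{1..r}. (c p (fst u) (snd u))\<^sup>2) = 0"
    using gram_diag[OF assms(1)] assms(2) unfolding gram_def by (simp add: power2_eq_square)
  then show ?thesis
    using assms(3) by (simp add: sum_nonneg_eq_0_iff)
qed

lemma gram_eq_0_if_unoccupied: "u \<in> grid m n \<Longrightarrow> \<not> occ u \<Longrightarrow> G u v = 0"
  unfolding gram_def using coeff_eq_0_if_unoccupied by (intro sum.neutral) auto

lemma gram_eq_same_term_if_corner_unoccupied: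
  assumes "(i, j) \<in> grid m n" "(k, l) \<in> grid m n" "\<not> (occ (k, j) \<and> occ (i, l))"
  shows "G (i, j) (k, l) = of_bool (same_term (i, j) (k, l))"
proof -
  have "(k, j) \<in> grid m n" "(i, l) \<in> grid m n"
    using assms(1,2) by (auto simp: grid_def)
  then have "G (k, j) (i, l) = 0"
    using assms(3) gram_eq_0_if_unoccupied gram_sym by metis
  moreover have "\<not> same_term (k, j) (i, l)"
    using assms(3) same_term_occ by blast
  ultimately show ?thesis
    using gram_cross[OF assms(1,2)] by simp
qed

lemma gram_paired:
  assumes "paired u v"
  shows "G u v = 1"
proof -
  obtain i j k l where uv: "u = (i, j)" "v = (k, l)"
    by (cases u, cases v) blast
  then have "(i, j) \<in> grid m n" "(k, l) \<in> grid m n" "\<not> (occ (k, j) \<and> occ (i, l))"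
    using assms paired_cells paired_opposite_unoccupied by blast+
  then show ?thesis
    using assms uv gram_eq_same_term_if_corner_unoccupied unfolding same_term_def by simp
qed

lemma coeff_eq_if_paired:
  assumes "paired u v" "p \<in> {1..r}"
  shows "c p (fst u) (snd u) = c p (fst v) (snd v)"
proof -
  have "u \<in> grid m n" "v \<in> grid m n" "occ u" "occ v"
    using assms(1) paired_sym paired_occ occ_grid by blast+
  have square: "(x - y)\<^sup>2 = x * x - 2 * (x * y) + y * y" for x y :: real
    by algebra
  have "(\<Sum>p\<in>{1..r}. (c p (fst u) (snd u) - c p (fst v) (snd v))\<^sup>2) = G u u - 2 * G u v + G v v"
    unfolding gram_def square by (simp add: sum.distrib sum_subtractf sum_distrib_left)
  also have "\<dots> = 0"
    using \<open>u \<in> grid m n\<close> \<open>v \<in> grid m n\<close> \<open>occ u\<close> \<open>occ v\<close> assms(1) by (simp add: gram_diag gram_paired)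
  finally show ?thesis
    using assms(2) by (simp add: sum_nonneg_eq_0_iff)
qed

lemma gram_eq_if_paired: "paired u v \<Longrightarrow> G u w = G v w"
  unfolding gram_def by (intro sum.cong refl) (simp add: coeff_eq_if_paired)

text \<open>The partner z of (i,j) has the same coefficient vector; either z and (k,l) are collinear,
  or the third condition on generalized 4-cycles forbids both of their opposite corners to be
  occupied.\<close>
lemma gram_eq_0_if_partnered:
  assumes "i \<noteq> k" "j \<noteq> l" "occ (k, l)" "occ (i, l)" "occ (k, j)"
    and "paired (i, j) z" "\<not> same_term (i, j) (k, l)"
  shows "G (i, j) (k, l) = 0"
proof -
  obtain p q where z: "z = (p, q)"
    by (cases z) blast
  have pq: "p \<noteq> i" "q \<noteq> j" "(p, q) \<in> grid m n"
    using assms(6) paired_cells paired_sym unfolding z by blast+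
  have kl: "(k, l) \<in> grid m n"
    using assms(3) occ_grid by blast
  have "G (i, j) (k, l) = G (p, q) (k, l)"
    using gram_eq_if_paired assms(6) z by blast
  also have "\<dots> = 0"
  proof (cases "p = k \<or> q = l")
    case True
    have "(p, q) \<noteq> (k, l)"
      using assms(6,7) z unfolding same_term_def by auto
    then show ?thesis
      using gram_collinear pq(3) kl True by blast
  next
    case False
    have "\<not> same_term (p, q) (k, l)"
    proof
      assume "same_term (p, q) (k, l)"
      then have "paired (p, q) (k, l)"
        using False unfolding same_term_def by auto
      then show False
        using assms(1,6) z paired_sym paired_unique by blast
    qed
    moreover have "\<not> (occ (k, q) \<and> occ (p, l))"
      using paired_five_cells[of i j p q k l] assms False pq z by auto
    ultimately show ?thesis
      using gram_eq_same_term_if_corner_unoccupied[OF pq(3) kl] by simp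
  qed
  finally show ?thesis .
qed

lemma gram_eq_0_if_corners_occupied:
  assumes "i \<noteq> k" "j \<noteq> l" "occ (i, j)" "occ (k, l)" "occ (k, j)" "occ (i, l)"
    and "\<not> same_term (i, j) (k, l)"
  shows "G (i, j) (k, l) = 0"
proof -
  have grid: "(i, j) \<in> grid m n" "(k, l) \<in> grid m n"
    using assms(3,4) occ_grid by blast+
  have not_same: "\<not> same_term (k, j) (i, l)"
    using assms paired_opposite_unoccupied[of k j i l] unfolding same_term_def by auto
  then have anti: "G (i, j) (k, l) = - G (k, j) (i, l)"
    using gram_cross[OF grid] assms(7) by simp
  have "\<not> ((i, j) \<in> E1 \<and> (i, l) \<in> E1 \<and> (k, j) \<in> E1 \<and> (k, l) \<in> E1)"
    using E1_C4_free assms(1,2) unfolding C4_free_def by blast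
  then consider z where "paired (i, j) z" | z where "paired (k, l) z"
    | z where "paired (k, j) z" | z where "paired (i, l) z"
    using assms(3-6) occ_iff by metis
  then show ?thesis
  proof cases
    case (1 z)
    then show ?thesis
      using gram_eq_0_if_partnered assms by blast
  next
    case (2 z)
    then have "G (k, l) (i, j) = 0"
      using gram_eq_0_if_partnered[of k i l j] assms same_term_sym by blast
    then show ?thesis
      using gram_sym by simp
  next
    case (3 z)
    then have "G (k, j) (i, l) = 0"
      using gram_eq_0_if_partnered[of k i j l] assms not_same by blast
    then show ?thesis
      using anti by simp
  next
    case (4 z)
    then have "G (i, l) (k, j) = 0"
      using gram_eq_0_if_partnered[of i k l j] assms not_same same_term_sym by blast
    then show ?thesis
      using anti gram_sym by simp
  qed
qed

lemma gram_eq_0_if_not_same_term: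
  assumes "occ u" "occ v" "\<not> same_term u v"
  shows "G u v = 0"
proof -
  obtain i j k l where uv: "u = (i, j)" "v = (k, l)"
    by (cases u, cases v) blast
  have grid: "(i, j) \<in> grid m n" "(k, l) \<in> grid m n"
    using assms(1,2) occ_grid uv by blast+
  consider "i = k \<or> j = l" | "\<not> (occ (k, j) \<and> occ (i, l))"
    | "i \<noteq> k" "j \<noteq> l" "occ (k, j)" "occ (i, l)"
    by blast
  then show ?thesis
  proof cases
    case 1
    moreover have "u \<noteq> v"
      using assms same_term_refl_iff by blast
    ultimately show ?thesis
      using gram_collinear grid uv by blast
  next
    case 2
    then show ?thesis
      using gram_eq_same_term_if_corner_unoccupied grid assms(3) uv by simp
  next
    case 3
    then show ?thesis
      using gram_eq_0_if_corners_occupied assms uv by blast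
  qed
qed

lemma lead_cells_orthonormal:
  assumes "q \<in> lead_cells" "q' \<in> lead_cells"
  shows "G q q' = of_bool (q = q')"
proof -
  have "occ q" "occ q'"
    using assms lead_cells_occ by blast+
  moreover have "\<not> same_term q q'" if "q \<noteq> q'"
  proof -
    have "(q, q') \<notin> E2"
      using assms(2) second_half_not_lead by blast
    then show ?thesis
      using that same_term_lead_iff[OF assms(1), of q'] by auto
  qed
  ultimately show ?thesis
    using occ_grid gram_diag gram_eq_0_if_not_same_term by (cases "q = q'") simp_all
qed

lemma card_lead_cells_le: "card lead_cells \<le> r"
proof -
  have "card lead_cells \<le> card {1..r}"
    using lead_cells_orthonormal unfolding gram_def
    by (intro card_le_card_if_orthonormal[where v = "\<lambda>q p. c p (fst q) (snd q)"] finite_lead_cells) auto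
  then show ?thesis
    by simp
qed

end

context gen_C4_free_config
begin

lemma sos_with_config_form: "sos_with m n config_form (card lead_cells)"
  using config_form_reference unfolding sos_with_iff by metis

lemma card_lead_cells_le_if_sos_with:
  assumes "sos_with m n config_form r"
  shows "card lead_cells \<le> r"
proof -
  obtain c0 where c0: "\<And>u v. gram c0 (card lead_cells) u v = of_bool (same_term u v)"
    and reference: "biquad m n config_form = sum_sq_bilin m n c0 (card lead_cells)"
    by (rule config_form_reference) blast
  obtain c where "biquad m n config_form = sum_sq_bilin m n c r"
    using assms unfolding sos_with_iff by blast
  with reference have "sum_sq_bilin m n c r = sum_sq_bilin m n c0 (card lead_cells)"
    by simp
  from gram_cross_eq_if_sum_sq_bilin_eq[OF this]
  interpret config_gram m n E1 E2 c r
    by unfold_locales (simp only: c0)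
  show ?thesis
    by (rule card_lead_cells_le)
qed

lemma sos_rank_config_form: "sos_rank m n config_form = card E1 + card E2"
  unfolding sos_rank_def card_lead_cells[symmetric]
  using sos_with_config_form card_lead_cells_le_if_sos_with by (rule Least_equality)

lemma is_sos_config_form: "is_sos m n config_form"
  unfolding is_sos_def using sos_with_config_form by blast

end

definition config_sizes :: "nat \<Rightarrow> nat \<Rightarrow> nat set" where
  "config_sizes m n = {card E1 + card E2 | E1 E2.
      double_config m n E1 E2 \<and> simple_config E1 E2 \<and> \<not> has_gen_C4 E1 E2}"

lemma double_config_card_le:
  assumes "double_config m n E1 E2"
  shows "card E1 + card E2 \<le> m * n + m * n * (m * n)"
proof -
  have "E1 \<subseteq> grid m n" "E2 \<subseteq> grid m n \<times> grid m n"
    using assms unfolding double_config_def by auto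
  then have "card E1 \<le> card (grid m n)" "card E2 \<le> card (grid m n \<times> grid m n)"
    using finite_grid finite_cartesian_product card_mono by blast+
  then show ?thesis
    by (simp add: card_grid card_cartesian_product)
qed

lemma finite_config_sizes: "finite (config_sizes m n)"
  unfolding config_sizes_def
  by (rule finite_subset[of _ "{..m * n + m * n * (m * n)}"]) (auto dest: double_config_card_le)

lemma card_in_config_sizes:
  assumes "E \<subseteq> grid m n" "C4_free E"
  shows "card E \<in> config_sizes m n"
proof -
  have "double_config m n E {} \<and> simple_config E {} \<and> \<not> has_gen_C4 E {}"
    using assms unfolding double_config_def simple_config_def has_gen_C4_def by simp
  then show ?thesis
    unfolding config_sizes_def by force
qed

lemma zaran2_attained:
  obtains E1 E2 where "double_config m n E1 E2" "simple_config E1 E2" "\<not> has_gen_C4 E1 E2"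
    and "zaran2 m n = card E1 + card E2"
proof -
  have "config_sizes m n \<noteq> {}"
    using card_in_config_sizes[of "{}" m n] unfolding C4_free_def by blast
  then have "zaran2 m n \<in> config_sizes m n"
    unfolding zaran2_def config_sizes_def[symmetric] using finite_config_sizes by (rule Max_in[rotated])
  then show thesis
    using that unfolding config_sizes_def by blast
qed

lemma zaran_le_zaran2: "zaran m n \<le> zaran2 m n"
proof -
  have "{card E | E. E \<subseteq> grid m n \<and> C4_free E} \<subseteq> config_sizes m n"
    using card_in_config_sizes by blast
  moreover have "card ({} :: (nat \<times> nat) set) \<in> {card E | E. E \<subseteq> grid m n \<and> C4_free E}"
    unfolding C4_free_def by blast
  ultimately show ?thesis
    unfolding zaran_def zaran2_def config_sizes_def[symmetric]
    using finite_config_sizes by (intro Max_mono) auto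
qed

theorem theorem2p2:
  fixes m n :: nat
  assumes "m \<ge> 2" and "n \<ge> 2"
  shows "BSR m n \<ge> zaran2 m n \<and> zaran2 m n \<ge> zaran m n"
proof -
  obtain E1 E2 where "double_config m n E1 E2" "simple_config E1 E2" "\<not> has_gen_C4 E1 E2"
    and max: "zaran2 m n = card E1 + card E2"
    by (rule zaran2_attained)
  then interpret gen_C4_free_config m n E1 E2
    by unfold_locales
  have "zaran2 m n = sos_rank m n config_form"
    using max sos_rank_config_form by simp
  also have "\<dots> \<le> BSR m n"
    by (rule sos_rank_le_BSR[OF is_sos_config_form])
  finally show ?thesis
    using zaran_le_zaran2 by simp
qed

end
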